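(* Let $g:[0,1]\to[0,\infty)$, let $G_0(X^n,P)=\sum_{x\in\mathcal{X}}g(p_x)\,I(F_x(X^n)=0)$ and $L_{G_0}(\lambda)=\log E\big[e^{\lambda(G_0-E[G_0])}\big]$. Then for all $\lambda>0$, $$L_{G_0}(\lambda)\le\sum_{r=2}^{\infty}\frac{\lambda^r}{r!}\,u^*_r(n,g),\qquad u^*_r(n,g)=\max_{0<p<1}g(p)^r(1-p)^n\frac{1-(1-p)^n}{p}.$$
   Context: $P$ is a discrete probability distribution on a countable alphabet $\mathcal{X}$, $p_x=P(x)$, and $X^n=(X_1,\ldots,X_n)$ are i.i.d. samples from $P$. $F_x(X^n)=\sum_{i=1}^n I(X_i=x)$ is the number of occurrences of $x$ in $X^n$, and $I(\cdot)$ is the indicator. *)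

theory Defs
  imports "HOL-Probability.Probability"
begin

definition occ :: "'a \<Rightarrow> 'a list \<Rightarrow> nat" where
  "occ x xs = count_list xs x"

definition G0 :: "(real \<Rightarrow> real) \<Rightarrow> 'a pmf \<Rightarrow> 'a list \<Rightarrow> real" where
  "G0 g P xs = (\<Sum>\<^sub>\<infinity>x\<in>set_pmf P. g (pmf P x) * (if occ x xs = 0 then 1 else 0))"

definition L_G0 :: "(real \<Rightarrow> real) \<Rightarrow> 'a pmf \<Rightarrow> nat \<Rightarrow> real \<Rightarrow> real" where
  "L_G0 g P n lam = ln (measure_pmf.expectation (replicate_pmf n P)
      (\<lambda>xs. exp (lam * (G0 g P xs - measure_pmf.expectation (replicate_pmf n P) (G0 g P)))))"

definition u_star :: "nat \<Rightarrow> nat \<Rightarrow> (real \<Rightarrow> real) \<Rightarrow> ereal" where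
  "u_star r n g = (SUP p\<in>{0<..<1::real}. ereal (g p ^ r * (1 - p) ^ n * (1 - (1 - p) ^ n) / p))"

end

theory Submission
  imports Defs
begin

text \<open>Write \<open>G\<^sub>0 = \<Sum>\<^sub>x g(p\<^sub>x) Z\<^sub>x\<close>, where \<open>Z\<^sub>x\<close> indicates that \<open>x\<close> is missing from the sample,
  so \<open>E Z\<^sub>x = q\<^sub>x = (1 - p\<^sub>x)\<^sup>n\<close>. The indicators are negatively dependent: the sample avoids a
  set \<open>X\<close> with probability \<open>(1 - P X)\<^sup>n \<le> \<Prod>\<^sub>x\<^sub>\<in>\<^sub>X q\<^sub>x\<close>, so expanding \<open>\<Prod>(1 + a\<^sub>x Z\<^sub>x)\<close> over
  subsets gives \<open>E \<Prod>(1 + a\<^sub>x Z\<^sub>x) \<le> \<Prod>(1 + a\<^sub>x q\<^sub>x)\<close> for \<open>a\<^sub>x \<ge> 0\<close>. With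
  \<open>a\<^sub>x = exp(\<lambda> g(p\<^sub>x)) - 1\<close> the cumulant generating function of \<open>G\<^sub>0\<close> is therefore at most
  \<open>\<Sum>\<^sub>x (ln(1 + q\<^sub>x a\<^sub>x) - \<lambda> g(p\<^sub>x) q\<^sub>x)\<close>, and \<open>ln(1 + q(e\<^sup>s - 1)) - s q \<le> q(1 - q)(e\<^sup>s - 1 - s)\<close>.
  Expanding \<open>e\<^sup>s - 1 - s\<close> as a power series, the coefficient of \<open>\<lambda>\<^sup>r/r!\<close> is \<open>\<Sum>\<^sub>x p\<^sub>x h\<^sub>r(p\<^sub>x)\<close>
  with \<open>h\<^sub>r\<close> the function maximised in \<open>u*\<^sub>r\<close>, hence at most \<open>u*\<^sub>r\<close>. Infinite alphabets are
  handled by truncating to finite parts of the support; the discarded mass shifts the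
  bound by an arbitrarily small amount.\<close>

lemma emeasure_replicate_pmf_avoid:
  "emeasure (replicate_pmf n P) {xs. set xs \<inter> B = {}} = emeasure P (- B) ^ n"
proof (induction n)
  case 0
  then show ?case by (simp add: emeasure_return_pmf indicator_def)
next
  case (Suc n)
  let ?A = "{xs. set xs \<inter> B = {}}"
  have "emeasure (replicate_pmf (Suc n) P) ?A
      = (\<integral>\<^sup>+x. (\<integral>\<^sup>+xs. indicator (- B) x * indicator ?A xs \<partial>replicate_pmf n P) \<partial>P)"
    by (simp add: indicator_def of_bool_def; intro nn_integral_cong; simp)
  also have "\<dots> = (\<integral>\<^sup>+x. indicator (- B) x * emeasure (replicate_pmf n P) ?A \<partial>P)"
    by (subst nn_integral_cmult) auto
  also have "\<dots> = emeasure P (- B) * emeasure (replicate_pmf n P) ?A"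
    by (subst nn_integral_multc) auto
  finally show ?case using Suc by simp
qed

lemma prob_replicate_pmf_avoid:
  "measure_pmf.prob (replicate_pmf n P) {xs. set xs \<inter> B = {}} = (1 - measure_pmf.prob P B) ^ n"
proof -
  have "ennreal (measure_pmf.prob (replicate_pmf n P) {xs. set xs \<inter> B = {}})
      = ennreal (measure_pmf.prob P (- B) ^ n)"
    using emeasure_replicate_pmf_avoid[of n P B]
    by (simp add: measure_pmf.emeasure_eq_measure ennreal_power)
  then show ?thesis
    using measure_pmf.prob_compl[of B P] by (simp add: Compl_eq_Diff_UNIV)
qed

lemma prod_absent_expand:
  fixes a :: "'a \<Rightarrow> real"
  assumes "finite B"
  shows "(\<Prod>x\<in>B. a x * of_bool (x \<notin> set xs) + 1)
       = (\<Sum>X\<in>Pow B. prod a X * indicator {xs. set xs \<inter> X = {}} xs)"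
  unfolding prod_add[OF assms]
proof (intro sum.cong refl)
  fix X assume "X \<in> Pow B"
  then have "finite X" using assms finite_subset by auto
  then have "(\<Prod>x\<in>X. of_bool (x \<notin> set xs)) = (indicator {xs. set xs \<inter> X = {}} xs :: real)"
    by (auto simp: indicator_def prod_zero_iff intro!: prod.neutral)
  then show "(\<Prod>x\<in>X. a x * of_bool (x \<notin> set xs)) * (\<Prod>x\<in>B - X. 1)
      = prod a X * indicator {xs. set xs \<inter> X = {}} xs"
    by (simp add: prod.distrib)
qed

lemma expectation_prod_absent_le:
  fixes a :: "'a \<Rightarrow> real"
  assumes B: "finite B" and a: "\<And>x. x \<in> B \<Longrightarrow> a x \<ge> 0"
  shows "measure_pmf.expectation (replicate_pmf n P) (\<lambda>xs. \<Prod>x\<in>B. a x * of_bool (x \<notin> set xs) + 1)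
     \<le> (\<Prod>x\<in>B. a x * (1 - pmf P x) ^ n + 1)"
proof -
  let ?M = "replicate_pmf n P"
  have "measure_pmf.expectation ?M (\<lambda>xs. \<Prod>x\<in>B. a x * of_bool (x \<notin> set xs) + 1)
      = (\<Sum>X\<in>Pow B. prod a X * measure_pmf.prob ?M {xs. set xs \<inter> X = {}})"
    unfolding prod_absent_expand[OF B]
    by (subst Bochner_Integration.integral_sum)
       (auto intro!: integrable_real_indicator simp: measure_pmf.emeasure_eq_measure)
  also have "\<dots> = (\<Sum>X\<in>Pow B. prod a X * (1 - measure_pmf.prob P X) ^ n)"
    by (simp add: prob_replicate_pmf_avoid)
  also have "\<dots> \<le> (\<Sum>X\<in>Pow B. prod a X * (\<Prod>x\<in>X. (1 - pmf P x) ^ n))"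
  proof (intro sum_mono mult_left_mono)
    fix X assume "X \<in> Pow B"
    then have fX: "finite X" and XB: "X \<subseteq> B" using B finite_subset by auto
    show "0 \<le> prod a X" using a XB by (auto intro: prod_nonneg)
    have "1 - measure_pmf.prob P X \<le> (\<Prod>x\<in>X. 1 - pmf P x)"
      using Weierstrass_prod_ineq[of X "pmf P"] fX by (simp add: measure_measure_pmf_finite pmf_le_1)
    then show "(1 - measure_pmf.prob P X) ^ n \<le> (\<Prod>x\<in>X. (1 - pmf P x) ^ n)"
      by (simp add: prod_power_distrib[symmetric] power_mono)
  qed
  also have "\<dots> = (\<Sum>X\<in>Pow B. (\<Prod>x\<in>X. a x * (1 - pmf P x) ^ n) * (\<Prod>x\<in>B - X. 1))"
    by (simp add: prod.distrib)
  also have "\<dots> = (\<Prod>x\<in>B. a x * (1 - pmf P x) ^ n + 1)"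
    by (rule prod_add[OF B, symmetric])
  finally show ?thesis .
qed

lemma ln_bernoulli_mgf_le:
  fixes t q :: real
  assumes t: "t \<ge> 0" and q: "0 \<le> q" "q \<le> 1"
  shows "ln ((exp t - 1) * q + 1) \<le> t * q + q * (1 - q) * (exp t - 1 - t)"
proof -
  define h where "h s = s * q + q * (1 - q) * (exp s - 1 - s) - ln ((exp s - 1) * q + 1)" for s
  have "h 0 \<le> h t"
  proof (rule DERIV_nonneg_imp_nondecreasing[OF t])
    fix s :: real assume s: "0 \<le> s" "s \<le> t"
    define D where "D = (exp s - 1) * q + 1"
    have e1: "exp s - 1 \<ge> 0" using s by simp
    then have D1: "D \<ge> 1" using q by (simp add: D_def)
    have "DERIV h s :> q + q * (1 - q) * (exp s - 1) - q * exp s / D"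
      unfolding h_def D_def using D1 by (auto intro!: derivative_eq_intros simp: D_def field_simps)
    moreover have "q * exp s / D - q = q * (1 - q) * (exp s - 1) / D"
      using D1 by (simp add: D_def field_simps)
    moreover have "q * (1 - q) * (exp s - 1) \<ge> 0"
      using e1 q by simp
    then have "q * (1 - q) * (exp s - 1) / D \<le> q * (1 - q) * (exp s - 1)"
      using D1 by (simp add: divide_le_eq mult_le_cancel_left1)
    ultimately show "\<exists>y. DERIV h s :> y \<and> 0 \<le> y" by force
  qed
  then show ?thesis by (simp add: h_def)
qed

definition cgf :: "'a pmf \<Rightarrow> ('a \<Rightarrow> real) \<Rightarrow> real \<Rightarrow> real" where
  "cgf M f t = ln (measure_pmf.expectation M (\<lambda>x. exp (t * (f x - measure_pmf.expectation M f))))"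

lemma L_G0_eq_cgf: "L_G0 g P n t = cgf (replicate_pmf n P) (G0 g P) t"
  by (simp add: L_G0_def cgf_def)

lemma integrable_measure_pmf_bounded:
  fixes M :: "'a pmf" and f :: "'a \<Rightarrow> real"
  assumes "\<And>x. \<bar>f x\<bar> \<le> C"
  shows "integrable (measure_pmf M) f"
  by (rule measure_pmf.integrable_const_bound[of _ C]) (auto simp: assms)

lemma integrable_exp_bounded:
  fixes M :: "'a pmf" and f :: "'a \<Rightarrow> real"
  assumes "\<And>x. \<bar>f x\<bar> \<le> C"
  shows "integrable M (\<lambda>x. exp (t * f x))"
proof (rule integrable_measure_pmf_bounded)
  fix x
  have "t * f x \<le> \<bar>t\<bar> * C"
    using mult_left_mono[OF assms[of x] abs_ge_zero[of t]] abs_ge_self[of "t * f x"]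
    by (simp add: abs_mult)
  then show "\<bar>exp (t * f x)\<bar> \<le> exp (\<bar>t\<bar> * C)" by simp
qed

lemma expectation_exp_bounded_pos:
  fixes M :: "'a pmf" and f :: "'a \<Rightarrow> real"
  assumes "\<And>x. \<bar>f x\<bar> \<le> C"
  shows "measure_pmf.expectation M (\<lambda>x. exp (t * f x)) > 0"
proof -
  have "- (\<bar>t\<bar> * C) \<le> t * f x" for x
    using mult_left_mono[OF assms[of x] abs_ge_zero[of t]] abs_ge_self[of "- (t * f x)"]
    by (simp add: abs_mult)
  then have "measure_pmf.expectation M (\<lambda>_. exp (- (\<bar>t\<bar> * C))) \<le> measure_pmf.expectation M (\<lambda>x. exp (t * f x))"
    using integrable_exp_bounded[where f = f, OF assms] by (intro integral_mono) auto
  then have "exp (- (\<bar>t\<bar> * C)) \<le> measure_pmf.expectation M (\<lambda>x. exp (t * f x))"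
    by simp
  then show ?thesis
    using exp_gt_zero[of "- (\<bar>t\<bar> * C)"] by linarith
qed

lemma cgf_eq_ln_mgf:
  fixes f :: "'a \<Rightarrow> real"
  assumes "\<And>x. \<bar>f x\<bar> \<le> C"
  shows "cgf M f t = ln (measure_pmf.expectation M (\<lambda>x. exp (t * f x))) - t * measure_pmf.expectation M f"
proof -
  have "cgf M f t = ln (measure_pmf.expectation M (\<lambda>x. exp (t * f x)) * exp (- (t * measure_pmf.expectation M f)))"
    by (simp add: cgf_def right_diff_distrib exp_diff exp_minus field_simps)
  moreover have "measure_pmf.expectation M (\<lambda>x. exp (t * f x)) > 0"
    by (rule expectation_exp_bounded_pos[where f = f, OF assms])
  ultimately show ?thesis
    by (simp add: ln_mult)
qed

lemma cgf_le_sandwich: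
  fixes f h :: "'a \<Rightarrow> real"
  assumes h_bounded: "\<And>x. \<bar>h x\<bar> \<le> C"
    and lower: "\<And>x. h x \<le> f x" and upper: "\<And>x. f x \<le> h x + d" and t: "t \<ge> 0"
  shows "cgf M f t \<le> t * d + cgf M h t"
proof -
  have f_bounded: "\<bar>f x\<bar> \<le> C + \<bar>d\<bar>" for x
    using h_bounded[of x] lower[of x] upper[of x] by linarith
  have int_h: "integrable M h"
    by (rule integrable_measure_pmf_bounded) (rule h_bounded)
  have int_f: "integrable M f"
    by (rule integrable_measure_pmf_bounded) (rule f_bounded)
  let ?Ef = "measure_pmf.expectation M (\<lambda>x. exp (t * f x))"
  let ?Eh = "measure_pmf.expectation M (\<lambda>x. exp (t * h x))"
  have "t * f x \<le> t * d + t * h x" for x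
    using mult_left_mono[OF upper t] by (simp add: algebra_simps)
  moreover have "integrable M (\<lambda>x. exp (t * f x))" "integrable M (\<lambda>x. exp (t * h x))"
    by (rule integrable_exp_bounded[where f = f, OF f_bounded] integrable_exp_bounded[where f = h, OF h_bounded])+
  ultimately have "?Ef \<le> measure_pmf.expectation M (\<lambda>x. exp (t * d) * exp (t * h x))"
    by (intro integral_mono integrable_mult_right) (auto simp flip: exp_add)
  moreover have "?Ef > 0" and pos_h: "?Eh > 0"
    by (rule expectation_exp_bounded_pos[where f = f, OF f_bounded] expectation_exp_bounded_pos[where f = h, OF h_bounded])+
  ultimately have "ln ?Ef \<le> ln (exp (t * d) * ?Eh)"
    by (subst ln_le_cancel_iff) auto
  also have "\<dots> = t * d + ln ?Eh"
    using pos_h by (simp add: ln_mult)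
  finally have "ln ?Ef \<le> t * d + ln ?Eh" .
  moreover have "t * measure_pmf.expectation M h \<le> t * measure_pmf.expectation M f"
    using int_h int_f lower t by (intro mult_left_mono integral_mono) auto
  ultimately show ?thesis
    by (simp add: cgf_eq_ln_mgf[OF f_bounded] cgf_eq_ln_mgf[OF h_bounded])
qed

lemma abs_sum_of_bool_weights_le:
  fixes c :: "'a \<Rightarrow> real"
  assumes "\<And>x. x \<in> B \<Longrightarrow> c x \<ge> 0"
  shows "\<bar>\<Sum>x\<in>B. c x * of_bool (Q x)\<bar> \<le> sum c B"
  using assms by (auto simp: sum_nonneg intro!: sum_mono order.trans[OF sum_abs])

lemma cgf_absent_sum_le:
  fixes c :: "'a \<Rightarrow> real"
  assumes B: "finite B" and c: "\<And>x. x \<in> B \<Longrightarrow> c x \<ge> 0" and t: "t \<ge> 0"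
  shows "cgf (replicate_pmf n P) (\<lambda>xs. \<Sum>x\<in>B. c x * of_bool (x \<notin> set xs)) t
     \<le> (\<Sum>x\<in>B. (1 - pmf P x) ^ n * (1 - (1 - pmf P x) ^ n) * (exp (t * c x) - 1 - t * c x))"
proof -
  let ?M = "replicate_pmf n P"
  let ?G = "\<lambda>xs. \<Sum>x\<in>B. c x * of_bool (x \<notin> set xs)"
  define q where "q x = (1 - pmf P x) ^ n" for x
  define a where "a x = exp (t * c x) - 1" for x
  have q: "0 \<le> q x" "q x \<le> 1" for x
    unfolding q_def by (auto simp: pmf_le_1 power_le_one)
  have a: "a x \<ge> 0" if "x \<in> B" for x
    unfolding a_def using c[OF that] t by simp
  have bounded: "\<bar>?G xs\<bar> \<le> sum c B" for xs
    using c by (rule abs_sum_of_bool_weights_le)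
  have absent_indicator: "of_bool (x \<notin> set xs) = indicator {xs. set xs \<inter> {x} = {}} xs" for x xs
    by (simp add: indicator_def)
  have "measure_pmf.expectation ?M (\<lambda>xs. of_bool (x \<notin> set xs)) = q x" for x
    unfolding absent_indicator using prob_replicate_pmf_avoid[of n P "{x}"] by (simp add: q_def measure_pmf_single)
  then have mean: "measure_pmf.expectation ?M ?G = (\<Sum>x\<in>B. c x * q x)"
    by (subst Bochner_Integration.integral_sum) (auto intro!: integrable_measure_pmf_bounded[of _ 1])
  have "exp (t * ?G xs) = (\<Prod>x\<in>B. a x * of_bool (x \<notin> set xs) + 1)" for xs
    unfolding sum_distrib_left exp_sum[OF B] a_def by (intro prod.cong) auto
  then have "measure_pmf.expectation ?M (\<lambda>xs. exp (t * ?G xs))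
      = measure_pmf.expectation ?M (\<lambda>xs. \<Prod>x\<in>B. a x * of_bool (x \<notin> set xs) + 1)"
    by simp
  also have "\<dots> \<le> (\<Prod>x\<in>B. a x * q x + 1)"
    unfolding q_def by (rule expectation_prod_absent_le[where a = a, OF B a])
  finally have mgf: "measure_pmf.expectation ?M (\<lambda>xs. exp (t * ?G xs)) \<le> (\<Prod>x\<in>B. a x * q x + 1)" .
  have pos: "a x * q x + 1 > 0" if "x \<in> B" for x
    using a[OF that] q[of x] by (simp add: add_nonneg_pos)
  have "ln (measure_pmf.expectation ?M (\<lambda>xs. exp (t * ?G xs))) \<le> ln (\<Prod>x\<in>B. a x * q x + 1)"
    using mgf expectation_exp_bounded_pos[where f = ?G and M = ?M and t = t, OF bounded] prod_pos[of B, OF pos]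
    by (subst ln_le_cancel_iff) auto
  also have "\<dots> = (\<Sum>x\<in>B. ln ((exp (t * c x) - 1) * q x + 1))"
    unfolding a_def using pos[unfolded a_def] by (intro ln_prod[OF B]) force
  also have "\<dots> \<le> (\<Sum>x\<in>B. t * c x * q x + q x * (1 - q x) * (exp (t * c x) - 1 - t * c x))"
  proof (intro sum_mono)
    fix x assume "x \<in> B"
    then show "ln ((exp (t * c x) - 1) * q x + 1) \<le> t * c x * q x + q x * (1 - q x) * (exp (t * c x) - 1 - t * c x)"
      using ln_bernoulli_mgf_le[of "t * c x" "q x"] q[of x] c t by simp
  qed
  finally show ?thesis
    using t unfolding cgf_eq_ln_mgf[where f = ?G, OF bounded] mean
    by (simp add: q_def sum.distrib sum_distrib_left mult.assoc)
qed

lemma sums_exp_minus_one_minus: "(\<lambda>r. t ^ (r + 2) / fact (r + 2)) sums (exp t - 1 - t)"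
  for t :: real
proof -
  have "(\<lambda>r. t ^ r / fact r) sums exp t"
    using exp_converges[of t] by (simp add: divide_inverse_commute scaleR_conv_of_real)
  then have "(\<lambda>r. t ^ (r + 2) / fact (r + 2)) sums (exp t - (\<Sum>i<2. t ^ i / fact i))"
    by (subst sums_iff_shift) simp
  then show ?thesis by (simp add: eval_nat_numeral diff_diff_eq)
qed

lemma u_star_upper:
  assumes "p \<in> {0<..<1}"
  shows "ereal (g p ^ k * (1 - p) ^ n * (1 - (1 - p) ^ n) / p) \<le> u_star k n g"
  unfolding u_star_def using assms by (rule SUP_upper2) simp

lemma u_star_nonneg:
  assumes "\<forall>p\<in>{0..1}. g p \<ge> 0"
  shows "0 \<le> u_star k n g"
proof -
  have "0 \<le> ereal (g (1/2) ^ k * (1 - 1/2) ^ n * (1 - (1 - 1/2) ^ n) / (1/2 :: real))"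
    using assms by (auto intro!: mult_nonneg_nonneg simp: power_le_one)
  also have "\<dots> \<le> u_star k n g"
    by (rule u_star_upper) simp
  finally show ?thesis .
qed

lemma sum_le_u_star:
  fixes g :: "real \<Rightarrow> real" and P :: "'a pmf"
  assumes g_nonneg: "\<forall>p\<in>{0..1}. g p \<ge> 0" and B: "finite B" "B \<subseteq> set_pmf P"
  shows "ereal (\<Sum>x\<in>B. g (pmf P x) ^ k * ((1 - pmf P x) ^ n * (1 - (1 - pmf P x) ^ n))) \<le> u_star k n g"
proof (cases "u_star k n g")
  case (real U)
  then have U: "U \<ge> 0" using u_star_nonneg[OF g_nonneg, of k n] by simp
  have summand: "g (pmf P x) ^ k * ((1 - pmf P x) ^ n * (1 - (1 - pmf P x) ^ n)) \<le> pmf P x * U"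
    if "x \<in> B" for x
  proof (cases "pmf P x = 1")
    case True
    \<comment> \<open>\<open>0 ^ n * (1 - 0 ^ n) = 0\<close> also for \<open>n = 0\<close>\<close>
    then show ?thesis using U by (cases n) auto
  next
    case False
    have "pmf P x > 0" using that B by (auto intro: pmf_positive)
    moreover have "pmf P x \<in> {0<..<1}" using False calculation by (simp add: pmf_le_1 less_le)
    then have "g (pmf P x) ^ k * (1 - pmf P x) ^ n * (1 - (1 - pmf P x) ^ n) / pmf P x \<le> U"
      using u_star_upper[of "pmf P x" g k n] real by simp
    ultimately show ?thesis by (simp add: divide_le_eq mult.commute mult.left_commute)
  qed
  have "(\<Sum>x\<in>B. g (pmf P x) ^ k * ((1 - pmf P x) ^ n * (1 - (1 - pmf P x) ^ n))) \<le> (\<Sum>x\<in>B. pmf P x) * U"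
    unfolding sum_distrib_right by (rule sum_mono) (rule summand)
  also have "\<dots> \<le> U"
    using U B by (simp add: measure_measure_pmf_finite[symmetric] mult_left_le_one_le)
  finally show ?thesis using real by simp
next
  case MInf
  then show ?thesis using u_star_nonneg[OF g_nonneg, of k n] by simp
qed simp

lemma sum_exp_remainder_le_u_star_series:
  fixes g :: "real \<Rightarrow> real" and P :: "'a pmf"
  assumes g_nonneg: "\<forall>p\<in>{0..1}. g p \<ge> 0" and B: "finite B" "B \<subseteq> set_pmf P" and t: "t > 0"
  shows "ereal (\<Sum>x\<in>B. (1 - pmf P x) ^ n * (1 - (1 - pmf P x) ^ n) * (exp (t * g (pmf P x)) - 1 - t * g (pmf P x)))
     \<le> (\<Sum>r. ereal (t ^ (r + 2) / fact (r + 2)) * u_star (r + 2) n g)"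
proof -
  define w where "w x = (1 - pmf P x) ^ n * (1 - (1 - pmf P x) ^ n)" for x
  define D where "D r = (\<Sum>x\<in>B. g (pmf P x) ^ (r + 2) * w x)" for r
  have "(\<lambda>r. \<Sum>x\<in>B. w x * ((t * g (pmf P x)) ^ (r + 2) / fact (r + 2)))
      sums (\<Sum>x\<in>B. w x * (exp (t * g (pmf P x)) - 1 - t * g (pmf P x)))"
    by (intro sums_sum sums_mult sums_exp_minus_one_minus)
  moreover have "(\<Sum>x\<in>B. w x * ((t * g (pmf P x)) ^ (r + 2) / fact (r + 2))) = t ^ (r + 2) / fact (r + 2) * D r" for r
    unfolding D_def by (simp add: sum_distrib_left power_mult_distrib sum_divide_distrib mult_ac)
  ultimately have "(\<lambda>r. ereal (t ^ (r + 2) / fact (r + 2) * D r))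
      sums ereal (\<Sum>x\<in>B. w x * (exp (t * g (pmf P x)) - 1 - t * g (pmf P x)))"
    by (simp add: sums_ereal)
  then have "ereal (\<Sum>x\<in>B. w x * (exp (t * g (pmf P x)) - 1 - t * g (pmf P x)))
      = (\<Sum>r. ereal (t ^ (r + 2) / fact (r + 2)) * ereal (D r))"
    by (simp add: sums_iff)
  also have "\<dots> \<le> (\<Sum>r. ereal (t ^ (r + 2) / fact (r + 2)) * u_star (r + 2) n g)"
  proof (rule suminf_le)
    have "D r \<ge> 0" for r
      unfolding D_def w_def using g_nonneg
      by (intro sum_nonneg mult_nonneg_nonneg zero_le_power) (auto simp: pmf_le_1 power_le_one)
    then show "summable (\<lambda>r. ereal (t ^ (r + 2) / fact (r + 2)) * ereal (D r))"
      using t by (intro summable_ereal_pos) auto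
    show "summable (\<lambda>r. ereal (t ^ (r + 2) / fact (r + 2)) * u_star (r + 2) n g)"
      using t u_star_nonneg[OF g_nonneg] by (intro summable_ereal_pos) (auto intro!: ereal_0_le_mult)
    show "ereal (t ^ (r + 2) / fact (r + 2)) * ereal (D r) \<le> ereal (t ^ (r + 2) / fact (r + 2)) * u_star (r + 2) n g" for r
      unfolding D_def w_def using t by (intro ereal_mult_left_mono sum_le_u_star[OF g_nonneg B]) auto
  qed
  finally show ?thesis by (simp add: w_def mult.commute)
qed

lemma infsum_weighted_bounds:
  fixes f z :: "'a \<Rightarrow> real"
  assumes f: "f summable_on A" "\<And>x. x \<in> A \<Longrightarrow> f x \<ge> 0"
    and z: "\<And>x. x \<in> A \<Longrightarrow> z x \<in> {0..1}" and B: "finite B" "B \<subseteq> A"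
  shows "(\<Sum>x\<in>B. f x * z x) \<le> (\<Sum>\<^sub>\<infinity>x\<in>A. f x * z x)"
    and "(\<Sum>\<^sub>\<infinity>x\<in>A. f x * z x) \<le> (\<Sum>x\<in>B. f x * z x) + (infsum f A - sum f B)"
proof -
  have fz_bounds: "0 \<le> f x * z x" "f x * z x \<le> f x" if "x \<in> A" for x
    using f(2)[OF that] z[OF that] by (auto simp: mult_left_le)
  have fz: "(\<lambda>x. f x * z x) summable_on A"
    by (rule summable_on_comparison_test[OF f(1)]) (use fz_bounds in auto)
  have split: "(\<Sum>\<^sub>\<infinity>x\<in>A. f x * z x) = (\<Sum>x\<in>B. f x * z x) + (\<Sum>\<^sub>\<infinity>x\<in>A - B. f x * z x)"
    using infsum_Diff[OF fz summable_on_finite[OF B(1)] B(2)] B by simp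
  have "0 \<le> (\<Sum>\<^sub>\<infinity>x\<in>A - B. f x * z x)"
    using fz_bounds by (intro infsum_nonneg) auto
  then show "(\<Sum>x\<in>B. f x * z x) \<le> (\<Sum>\<^sub>\<infinity>x\<in>A. f x * z x)"
    using split by simp
  have "(\<Sum>\<^sub>\<infinity>x\<in>A - B. f x * z x) \<le> infsum f (A - B)"
    using fz_bounds by (intro infsum_mono summable_on_subset[OF fz] summable_on_subset[OF f(1)]) auto
  also have "\<dots> = infsum f A - sum f B"
    using infsum_Diff[OF f(1) summable_on_finite[OF B(1)] B(2)] B by simp
  finally show "(\<Sum>\<^sub>\<infinity>x\<in>A. f x * z x) \<le> (\<Sum>x\<in>B. f x * z x) + (infsum f A - sum f B)"
    using split by simp
qed

lemma L_G0_le_truncation: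
  fixes P :: "'a pmf" and g :: "real \<Rightarrow> real"
  assumes g_nonneg: "\<forall>p\<in>{0..1}. g p \<ge> 0"
    and g_summable: "(\<lambda>x. g (pmf P x)) summable_on set_pmf P"
    and B: "finite B" "B \<subseteq> set_pmf P" and lam_pos: "lam > 0"
  shows "ereal (L_G0 g P n lam)
      \<le> ereal (lam * ((\<Sum>\<^sub>\<infinity>x\<in>set_pmf P. g (pmf P x)) - (\<Sum>x\<in>B. g (pmf P x))))
         + (\<Sum>r. ereal (lam ^ (r + 2) / fact (r + 2)) * u_star (r + 2) n g)"
proof -
  define gx where "gx x = g (pmf P x)" for x
  define d where "d = infsum gx (set_pmf P) - sum gx B"
  let ?h = "\<lambda>xs. \<Sum>x\<in>B. gx x * of_bool (x \<notin> set xs)"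
  have gx: "gx x \<ge> 0" for x
    unfolding gx_def using g_nonneg by (simp add: pmf_le_1)
  have G0_eq: "G0 g P xs = (\<Sum>\<^sub>\<infinity>x\<in>set_pmf P. gx x * of_bool (x \<notin> set xs))" for xs
    unfolding G0_def gx_def occ_def by (simp add: count_list_0_iff of_bool_def)
  have "L_G0 g P n lam \<le> lam * d + cgf (replicate_pmf n P) ?h lam"
    unfolding L_G0_eq_cgf
  proof (rule cgf_le_sandwich)
    show "\<bar>?h xs\<bar> \<le> sum gx B" for xs
      using gx by (rule abs_sum_of_bool_weights_le)
    show "?h xs \<le> G0 g P xs" "G0 g P xs \<le> ?h xs + d" for xs
      unfolding G0_eq d_def using g_summable[folded gx_def] gx B
      by (intro infsum_weighted_bounds; simp)+
  qed (use lam_pos in simp)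
  also have "cgf (replicate_pmf n P) ?h lam
      \<le> (\<Sum>x\<in>B. (1 - pmf P x) ^ n * (1 - (1 - pmf P x) ^ n) * (exp (lam * gx x) - 1 - lam * gx x))"
    (is "_ \<le> ?T")
    using B gx lam_pos by (intro cgf_absent_sum_le) auto
  finally have "ereal (L_G0 g P n lam) \<le> ereal (lam * d) + ereal ?T"
    by simp
  also have "\<dots> \<le> ereal (lam * d) + (\<Sum>r. ereal (lam ^ (r + 2) / fact (r + 2)) * u_star (r + 2) n g)"
    unfolding gx_def by (intro add_left_mono sum_exp_remainder_le_u_star_series[OF g_nonneg B lam_pos])
  finally show ?thesis
    unfolding d_def gx_def .
qed

theorem lemma5:
  fixes P :: "'a pmf" and g :: "real \<Rightarrow> real" and n :: nat and lam :: real
  assumes g_nonneg: "\<forall>p\<in>{0..1}. g p \<ge> 0"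
    and g_summable: "(\<lambda>x. g (pmf P x)) summable_on set_pmf P"
    and lam_pos: "lam > 0"
  shows "ereal (L_G0 g P n lam)
           \<le> (\<Sum>r. ereal (lam ^ (r + 2) / fact (r + 2)) * u_star (r + 2) n g)"
proof (rule ereal_le_epsilon2)
  fix e :: real assume e: "e > 0"
  obtain B where B: "finite B" "B \<subseteq> set_pmf P"
    and close: "dist (\<Sum>x\<in>B. g (pmf P x)) (\<Sum>\<^sub>\<infinity>x\<in>set_pmf P. g (pmf P x)) \<le> e / lam"
    using infsum_finite_approximation[OF g_summable, of "e / lam"] e lam_pos by auto
  from close have "lam * ((\<Sum>\<^sub>\<infinity>x\<in>set_pmf P. g (pmf P x)) - (\<Sum>x\<in>B. g (pmf P x))) \<le> e"
    using lam_pos by (simp add: dist_real_def abs_le_iff field_simps)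
  then show "ereal (L_G0 g P n lam)
      \<le> (\<Sum>r. ereal (lam ^ (r + 2) / fact (r + 2)) * u_star (r + 2) n g) + ereal e"
    using L_G0_le_truncation[OF g_nonneg g_summable B lam_pos, of n]
    by (simp add: add.commute add_right_mono order_trans)
qed

end
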